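(* Let $\varphi$ be a string representation of a graph $G$ on a surface $\mathbf S$, let $u,v$ be vertices of $G$, and let $W_1,W_2,W_3$ be three walks from $u$ to $v$. If the closed walk $W_1-W_2$ imitates a non-contractible closed curve, then at least one of the closed walks $W_1-W_3$ and $W_2-W_3$ imitates a non-contractible closed curve.
   Context: A string representation of $G$ on a surface $\mathbf S$ assigns to each vertex a bounded curve in $\mathbf S$ so that distinct vertices are adjacent iff their curves intersect. For walks $W=w_0,\dots,w_k$ and $W'=w'_0,\dots,w'_\ell$ with $w_k=w'_0$, $W+W'=w_0,\dots,w_k,w'_1,\dots,w'_\ell$; $-W$ is the reversal of $W$, and $W-W'=W+(-W')$. A walk $W=w_0,\dots,w_k$ imitates a curve $\pi\subseteq\bigcup_x\varphi(x)$ if $\pi$ can be partitioned into consecutive subcurves $\pi_0,\dots,\pi_k$ of positive length with $\pi=\pi_0+\dots+\pi_k$ and $\pi_i\subseteq\varphi(w_i)$. *)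

theory Defs
  imports "HOL-Analysis.Analysis"
begin

definition surface :: "'a topology \<Rightarrow> bool" where
  "surface S \<longleftrightarrow> Hausdorff_space S \<and>
     (\<forall>x\<in>topspace S. \<exists>U. openin S U \<and> x \<in> U \<and>
        subtopology S U homeomorphic_space (euclidean :: (real^2) topology))"

definition curve :: "'a topology \<Rightarrow> 'a set \<Rightarrow> bool" where
  "curve S C \<longleftrightarrow> (\<exists>g. pathin S g \<and> C = g ` {0..1}) \<and> \<not> (\<exists>c. C = {c})"

definition simple_graph :: "'v set \<Rightarrow> ('v \<Rightarrow> 'v \<Rightarrow> bool) \<Rightarrow> bool" where
  "simple_graph V E \<longleftrightarrow> finite V \<and>
     (\<forall>x y. E x y \<longrightarrow> x \<in> V \<and> y \<in> V \<and> x \<noteq> y \<and> E y x)"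

definition string_rep ::
  "'a topology \<Rightarrow> 'v set \<Rightarrow> ('v \<Rightarrow> 'v \<Rightarrow> bool) \<Rightarrow> ('v \<Rightarrow> 'a set) \<Rightarrow> bool" where
  "string_rep S V E \<phi> \<longleftrightarrow> (\<forall>x\<in>V. curve S (\<phi> x)) \<and>
     (\<forall>x\<in>V. \<forall>y\<in>V. x \<noteq> y \<longrightarrow> (E x y \<longleftrightarrow> \<phi> x \<inter> \<phi> y \<noteq> {}))"

definition walk :: "'v set \<Rightarrow> ('v \<Rightarrow> 'v \<Rightarrow> bool) \<Rightarrow> 'v list \<Rightarrow> bool" where
  "walk V E W \<longleftrightarrow> W \<noteq> [] \<and> set W \<subseteq> V \<and>
     (\<forall>i. Suc i < length W \<longrightarrow> E (W ! i) (W ! Suc i))"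

definition walk_plus :: "'v list \<Rightarrow> 'v list \<Rightarrow> 'v list" where
  "walk_plus W W' = W @ tl W'"

definition walk_minus :: "'v list \<Rightarrow> 'v list \<Rightarrow> 'v list" where
  "walk_minus W W' = walk_plus W (rev W')"

definition imitates :: "'a topology \<Rightarrow> ('v \<Rightarrow> 'a set) \<Rightarrow> 'v list \<Rightarrow> (real \<Rightarrow> 'a) \<Rightarrow> bool" where
  "imitates S \<phi> W g \<longleftrightarrow> pathin S g \<and>
     (\<exists>t::nat \<Rightarrow> real. t 0 = 0 \<and> t (length W) = 1 \<and>
        (\<forall>i<length W. t i < t (Suc i) \<and> g ` {t i..t (Suc i)} \<subseteq> \<phi> (W ! i) \<and>
            \<not> (\<exists>c. g ` {t i..t (Suc i)} = {c})))"

definition contractible_loop :: "'a topology \<Rightarrow> (real \<Rightarrow> 'a) \<Rightarrow> bool" where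
  "contractible_loop S g \<longleftrightarrow>
     homotopic_with (\<lambda>r. r 0 = r 1) (top_of_set {0..1}) S g (\<lambda>_. g 0)"

definition imitates_noncontractible :: "'a topology \<Rightarrow> ('v \<Rightarrow> 'a set) \<Rightarrow> 'v list \<Rightarrow> bool" where
  "imitates_noncontractible S \<phi> W \<longleftrightarrow>
     (\<exists>g. imitates S \<phi> W g \<and> g 0 = g 1 \<and> \<not> contractible_loop S g)"

end

theory Submission
  imports Defs
begin

(* Cut the loop g imitating W1 - W2 at a point s inside the piece of the common endpoint v.
   This yields a path \<alpha> imitating W1 and a path \<gamma> imitating W2, both from g 0 to g s.
   Since consecutive curves of a walk meet, there is a path \<delta> from g s back to g 0 imitating
   the reverse of W3; then \<alpha> \<delta> imitates W1 - W3 and \<gamma> \<delta> imitates W2 - W3. If both loops were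
   contractible, \<alpha> and \<gamma> would both be homotopic to \<delta>\<inverse> with fixed endpoints, so g, a
   reparametrisation of \<alpha> \<gamma>\<inverse>, would be contractible.
   The homotopy algebra is done in the library's setting of topological types, after embedding
   the surface (a locally compact Hausdorff, hence Tychonoff, space) into a product of real lines. *)

lemma cube_embedding_euclidean:
  "embedding_map (product_topology (\<lambda>_. top_of_set {0..1::real}) K) euclidean (\<lambda>x. x)"
proof (rule continuous_imp_embedding_map)
  let ?cube = "product_topology (\<lambda>_. top_of_set {0..1::real}) K"
  have "continuous_map ?cube euclideanreal (\<lambda>x. x k)" for k
  proof (cases "k \<in> K")
    case True
    show ?thesis
      using continuous_map_product_projection[OF True, of "\<lambda>_. top_of_set {0..1::real}"]
      by (rule continuous_map_into_fulltopology)
  next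
    case False
    then have "x k = undefined" if "x \<in> topspace ?cube" for x
      using that unfolding topspace_product_topology PiE_def extensional_def by blast
    moreover have "continuous_map ?cube euclideanreal (\<lambda>_. undefined)"
      by (rule continuous_map_const[THEN iffD2]) simp
    ultimately show ?thesis
      by (metis (no_types, lifting) continuous_map_eq)
  qed
  then show "continuous_map ?cube euclidean (\<lambda>x. x)"
    by (metis continuous_map_componentwise_UNIV euclidean_product_topology)
  show "compact_space ?cube"
    unfolding compact_space_product_topology
    by (simp add: compact_space_subtopology)
  show "Hausdorff_space (euclidean :: (_ \<Rightarrow> real) topology)"
    by (metis Hausdorff_space_euclidean Hausdorff_space_product_topology euclidean_product_topology)
qed simp

lemma surface_imp_locally_compact_space:
  assumes "surface S"
  shows "locally_compact_space S"
  unfolding locally_compact_space_def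
proof
  fix x assume x: "x \<in> topspace S"
  then obtain U where U: "openin S U" "x \<in> U"
    and chart: "subtopology S U homeomorphic_space (euclidean :: (real^2) topology)"
    using assms unfolding surface_def by blast
  have "locally_compact_space (subtopology S U)"
    using chart homeomorphic_locally_compact_space locally_compact_space_euclidean by blast
  moreover have "x \<in> topspace (subtopology S U)"
    using x U by simp
  ultimately obtain V K where V: "openin (subtopology S U) V" "x \<in> V" "V \<subseteq> K"
    and K: "compactin (subtopology S U) K"
    unfolding locally_compact_space_def by blast
  have "openin S V"
    using V(1) U(1) openin_trans_full by blast
  moreover have "compactin S K"
    using K compactin_subtopology by blast
  ultimately show "\<exists>V K. openin S V \<and> compactin S K \<and> x \<in> V \<and> V \<subseteq> K"
    using V by blast
qed

lemma surface_embedding_euclidean: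
  assumes "surface S"
  obtains e :: "'a \<Rightarrow> ('a \<Rightarrow> real) \<Rightarrow> real" where "embedding_map S euclidean e"
proof -
  have "Hausdorff_space S" "completely_regular_space S"
    using assms surface_imp_locally_compact_space
      locally_compact_regular_imp_completely_regular_space
    unfolding surface_def by blast+
  then obtain K :: "('a \<Rightarrow> real) set" and e
    where "embedding_map S (product_topology (\<lambda>_. top_of_set {0..1::real}) K) e"
    using completely_regular_space_cube_embedding by blast
  then show ?thesis
    using that embedding_map_compose cube_embedding_euclidean by fastforce
qed

lemma homotopic_paths_convex_image:
  fixes f g :: "real \<Rightarrow> 'a::real_normed_vector" and h :: "'a \<Rightarrow> 'b::topological_space"
  assumes "convex C" "path f" "path g" "path_image f \<subseteq> C" "path_image g \<subseteq> C"
    and "pathstart f = pathstart g" "pathfinish f = pathfinish g"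
    and "continuous_on C h" "h \<in> C \<rightarrow> S"
  shows "homotopic_paths S (h \<circ> f) (h \<circ> g)"
proof (rule homotopic_paths_continuous_image[OF _ assms(8,9)])
  show "homotopic_paths C f g"
    using assms(1-7)
    by (intro homotopic_paths_linear closed_segment_subset) (auto simp: path_image_def)
qed

(* The library proves the groupoid laws below with linepath a a, i.e. only in real normed vector
   spaces, which the product of real lines is not. Each is the image under p of the same law for
   paths in [0, 1]. *)

lemma homotopic_paths_comp_unit_interval:
  fixes p :: "real \<Rightarrow> 'a::topological_space"
  assumes "path p" "path_image p \<subseteq> S" "path f" "path g"
    and "path_image f \<subseteq> {0..1}" "path_image g \<subseteq> {0..1}"
    and "pathstart f = pathstart g" "pathfinish f = pathfinish g"
  shows "homotopic_paths S (p \<circ> f) (p \<circ> g)"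
  using assms by (intro homotopic_paths_convex_image) (auto simp: path_def path_image_def)

lemma homotopic_paths_rid_const:
  fixes p :: "real \<Rightarrow> 'a::topological_space"
  assumes "path p" "path_image p \<subseteq> S"
  shows "homotopic_paths S (p +++ (\<lambda>_. pathfinish p)) p"
proof -
  have "homotopic_paths S (p \<circ> (linepath 0 1 +++ linepath 1 1)) (p \<circ> linepath 0 1)"
    using assms by (intro homotopic_paths_comp_unit_interval) (auto simp: path_image_join closed_segment_eq_real_ivl)
  moreover have "p \<circ> (linepath 0 1 +++ linepath 1 1) = p +++ (\<lambda>_. pathfinish p)"
    by (auto simp: joinpaths_def linepath_def pathfinish_def)
  moreover have "p \<circ> linepath 0 1 = p"
    by (auto simp: linepath_def)
  ultimately show ?thesis by simp
qed

lemma homotopic_paths_lid_const: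
  fixes p :: "real \<Rightarrow> 'a::topological_space"
  assumes "path p" "path_image p \<subseteq> S"
  shows "homotopic_paths S ((\<lambda>_. pathstart p) +++ p) p"
proof -
  have "homotopic_paths S (p \<circ> (linepath 0 0 +++ linepath 0 1)) (p \<circ> linepath 0 1)"
    using assms by (intro homotopic_paths_comp_unit_interval) (auto simp: path_image_join closed_segment_eq_real_ivl)
  moreover have "p \<circ> (linepath 0 0 +++ linepath 0 1) = (\<lambda>_. pathstart p) +++ p"
    by (auto simp: joinpaths_def linepath_def pathstart_def)
  moreover have "p \<circ> linepath 0 1 = p"
    by (auto simp: linepath_def)
  ultimately show ?thesis by simp
qed

lemma homotopic_paths_rinv_const:
  fixes p :: "real \<Rightarrow> 'a::topological_space"
  assumes "path p" "path_image p \<subseteq> S"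
  shows "homotopic_paths S (p +++ reversepath p) (\<lambda>_. pathstart p)"
proof -
  have "homotopic_paths S (p \<circ> (linepath 0 1 +++ linepath 1 0)) (p \<circ> linepath 0 0)"
    using assms by (intro homotopic_paths_comp_unit_interval) (auto simp: path_image_join closed_segment_eq_real_ivl)
  moreover have "p \<circ> (linepath 0 1 +++ linepath 1 0) = p +++ reversepath p"
    by (auto simp: joinpaths_def reversepath_def linepath_def)
  ultimately show ?thesis by (simp add: linepath_def pathstart_def o_def)
qed

lemma homotopic_paths_conjugate_const_null:
  fixes \<beta> :: "real \<Rightarrow> 'a::topological_space"
  assumes \<beta>: "path \<beta>" "path_image \<beta> \<subseteq> S" "pathfinish \<beta> = a"
  shows "homotopic_paths S (\<beta> +++ (\<lambda>_. a) +++ reversepath \<beta>) (\<lambda>_. pathstart \<beta>)"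
proof -
  have "homotopic_paths S ((\<lambda>_. a) +++ reversepath \<beta>) (reversepath \<beta>)"
    using homotopic_paths_lid_const[of "reversepath \<beta>" S] \<beta> by simp
  then have "homotopic_paths S (\<beta> +++ (\<lambda>_. a) +++ reversepath \<beta>) (\<beta> +++ reversepath \<beta>)"
    using \<beta> by (intro homotopic_paths_join) (auto simp: pathstart_def joinpaths_def)
  then show ?thesis
    using homotopic_paths_rinv_const[OF \<beta>(1,2)] homotopic_paths_trans by blast
qed

lemma homotopic_loops_imp_homotopic_paths_null_const:
  fixes p :: "real \<Rightarrow> 'a::topological_space"
  assumes "homotopic_loops S p (\<lambda>_. a)"
  shows "homotopic_paths S p (\<lambda>_. pathstart p)"
proof -
  let ?Q = "{0..1::real} \<times> {0..1::real}"
  obtain h where h: "continuous_on ?Q h" "h \<in> ?Q \<rightarrow> S"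
    and h0: "\<forall>x\<in>{0..1}. h (0, x) = p x" and h1: "\<forall>x\<in>{0..1}. h (1, x) = a"
    and h_loop: "\<forall>s\<in>{0..1}. h (s, 1) = h (s, 0)"
    using assms by (auto simp: homotopic_loops pathstart_def pathfinish_def)
  \<comment> \<open>p is the left side of the square; h maps the other three sides to \<beta>, the constant a
    and the reverse of \<beta>, because it identifies the bottom and the top side.\<close>
  define \<beta> where "\<beta> = (\<lambda>s. h (s, 0))"
  have \<beta>: "path \<beta>" "path_image \<beta> \<subseteq> S" "pathfinish \<beta> = a"
    using h h1 unfolding \<beta>_def path_def path_image_def pathfinish_def
    by (auto intro!: continuous_on_compose2[OF h(1)] continuous_intros)
  have cQ: "convex ?Q"
    by (simp add: convex_Times)
  have segQ: "closed_segment x y \<subseteq> ?Q" if "x \<in> ?Q" "y \<in> ?Q" for x y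
    using that cQ by (simp add: closed_segment_subset)
  have sides: "homotopic_paths S (h \<circ> linepath (0, 0) (0, 1))
          (h \<circ> (linepath (0, 0) (1, 0) +++ linepath (1, 0) (1, 1) +++ linepath (1, 1) (0, 1)))"
    using h by (intro homotopic_paths_convex_image) (simp_all add: cQ path_image_join segQ)
  moreover have "homotopic_paths S p (h \<circ> linepath (0, 0) (0, 1))"
    using homotopic_loops_imp_path[OF assms] homotopic_loops_imp_subset[OF assms] h0
    by (intro homotopic_paths_eq) (auto simp: linepath_def)
  moreover have "homotopic_paths S
      (h \<circ> (linepath (0, 0) (1, 0) +++ linepath (1, 0) (1, 1) +++ linepath (1, 1) (0, 1)))
      (\<beta> +++ (\<lambda>_. a) +++ reversepath \<beta>)"
    using homotopic_paths_imp_path[OF sides] homotopic_paths_imp_subset[OF sides]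
    by (intro homotopic_paths_eq)
      (auto simp: joinpaths_def linepath_def reversepath_def \<beta>_def h1 h_loop)
  moreover have "homotopic_paths S (\<beta> +++ (\<lambda>_. a) +++ reversepath \<beta>) (\<lambda>_. pathstart \<beta>)"
    by (rule homotopic_paths_conjugate_const_null[OF \<beta>])
  ultimately show ?thesis
    using h0 by (auto simp: \<beta>_def pathstart_def intro: homotopic_paths_trans)
qed

lemma homotopic_paths_join_null_imp_reversepath:
  fixes \<alpha> \<delta> :: "real \<Rightarrow> 'a::topological_space"
  assumes \<alpha>: "path \<alpha>" "path_image \<alpha> \<subseteq> T" and \<delta>: "path \<delta>" "path_image \<delta> \<subseteq> T"
    and ends: "pathfinish \<alpha> = pathstart \<delta>" "pathfinish \<delta> = pathstart \<alpha>"
    and null: "homotopic_paths T (\<alpha> +++ \<delta>) (\<lambda>_. pathstart \<alpha>)"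
  shows "homotopic_paths T \<alpha> (reversepath \<delta>)"
proof -
  have "homotopic_paths T \<alpha> (\<alpha> +++ (\<lambda>_. pathfinish \<alpha>))"
    using homotopic_paths_rid_const[OF \<alpha>] homotopic_paths_sym by blast
  also have "homotopic_paths T \<dots> (\<alpha> +++ (\<delta> +++ reversepath \<delta>))"
    using homotopic_paths_rinv_const[OF \<delta>] \<alpha> ends
    by (intro homotopic_paths_join) (auto simp: homotopic_paths_sym pathstart_def)
  also have "homotopic_paths T \<dots> ((\<alpha> +++ \<delta>) +++ reversepath \<delta>)"
    using \<alpha> \<delta> ends by (intro homotopic_paths_assoc) auto
  also have "homotopic_paths T \<dots> ((\<lambda>_. pathstart \<alpha>) +++ reversepath \<delta>)"
    using null \<delta> ends by (intro homotopic_paths_join) auto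
  also have "homotopic_paths T \<dots> (reversepath \<delta>)"
    using homotopic_paths_lid_const[of "reversepath \<delta>" T] \<delta> ends by simp
  finally show ?thesis .
qed

lemma homotopic_loops_null_common_return:
  fixes \<alpha> \<gamma> \<delta> :: "real \<Rightarrow> 'a::topological_space"
  assumes \<alpha>: "path \<alpha>" "path_image \<alpha> \<subseteq> T" and \<gamma>: "path \<gamma>" "path_image \<gamma> \<subseteq> T"
    and \<delta>: "path \<delta>" "path_image \<delta> \<subseteq> T"
    and ends: "pathstart \<alpha> = a" "pathstart \<gamma> = a" "pathfinish \<delta> = a"
      "pathfinish \<alpha> = pathstart \<delta>" "pathfinish \<gamma> = pathstart \<delta>"
    and null_\<alpha>: "homotopic_loops T (\<alpha> +++ \<delta>) (\<lambda>_. a)"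
    and null_\<gamma>: "homotopic_loops T (\<gamma> +++ \<delta>) (\<lambda>_. a)"
  shows "homotopic_loops T (\<alpha> +++ reversepath \<gamma>) (\<lambda>_. a)"
proof -
  have "homotopic_paths T \<alpha> (reversepath \<delta>)"
    using homotopic_loops_imp_homotopic_paths_null_const[OF null_\<alpha>] \<alpha> \<delta> ends
    by (intro homotopic_paths_join_null_imp_reversepath) auto
  moreover have "homotopic_paths T \<gamma> (reversepath \<delta>)"
    using homotopic_loops_imp_homotopic_paths_null_const[OF null_\<gamma>] \<gamma> \<delta> ends
    by (intro homotopic_paths_join_null_imp_reversepath) auto
  ultimately have "homotopic_paths T \<alpha> \<gamma>"
    using homotopic_paths_sym homotopic_paths_trans by blast
  then have "homotopic_paths T (\<alpha> +++ reversepath \<gamma>) (\<gamma> +++ reversepath \<gamma>)"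
    using \<gamma> ends by (intro homotopic_paths_join) auto
  then have "homotopic_paths T (\<alpha> +++ reversepath \<gamma>) (\<lambda>_. a)"
    using homotopic_paths_rinv_const[OF \<gamma>] ends homotopic_paths_trans by force
  then show ?thesis
    using ends by (intro homotopic_paths_imp_homotopic_loops)
      (simp_all add: pathfinish_def[of "\<lambda>_. _"])
qed

lemma homotopic_paths_split_linepath:
  fixes p :: "real \<Rightarrow> 'a::topological_space"
  assumes "path p" "path_image p \<subseteq> T" "s \<in> {0..1}"
  shows "homotopic_paths T p ((p \<circ> linepath 0 s) +++ (p \<circ> linepath s 1))"
proof -
  have "homotopic_paths T (p \<circ> linepath 0 1) (p \<circ> (linepath 0 s +++ linepath s 1))"
    using assms by (intro homotopic_paths_comp_unit_interval) (auto simp: path_image_join closed_segment_eq_real_ivl)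
  moreover have "p \<circ> linepath 0 1 = p"
    by (auto simp: linepath_def)
  moreover have "p \<circ> (linepath 0 s +++ linepath s 1) = (p \<circ> linepath 0 s) +++ (p \<circ> linepath s 1)"
    by (auto simp: joinpaths_def)
  ultimately show ?thesis by simp
qed

(* joinpaths for paths in a type without topology: S is an arbitrary topology on 'a. *)

definition join_paths :: "(real \<Rightarrow> 'a) \<Rightarrow> (real \<Rightarrow> 'a) \<Rightarrow> real \<Rightarrow> 'a" where
  "join_paths p q = (\<lambda>x. if x \<le> 1/2 then p (2 * x) else q (2 * x - 1))"

lemma comp_join_paths: "e \<circ> join_paths p q = (e \<circ> p) +++ (e \<circ> q)"
  by (auto simp: join_paths_def joinpaths_def)

lemma pathin_compose_linepath:
  assumes "pathin S g" "a \<in> {0..1}" "b \<in> {0..1}"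
  shows "pathin S (g \<circ> linepath a b)"
proof -
  have "path_image (linepath a b) \<subseteq> {0..1}"
    using assms(2,3) by (auto simp: closed_segment_eq_real_ivl)
  then have "pathin (top_of_set {0..1}) (linepath a b)"
    by (auto simp: pathin_canon_iff path_image_def)
  then show ?thesis
    using assms(1) unfolding pathin_def by (rule continuous_map_compose)
qed

lemma pathin_join_paths:
  assumes "pathin S p" "pathin S q" "p 1 = q 0"
  shows "pathin S (join_paths p q)"
  unfolding pathin_def join_paths_def
proof (rule continuous_map_cases_le)
  let ?I = "top_of_set {0..1::real}"
  have half: "subtopology ?I {x \<in> topspace ?I. x \<le> 1/2} = top_of_set {0..1/2}"
    "subtopology ?I {x \<in> topspace ?I. 1/2 \<le> x} = top_of_set {1/2..1}"
    by (simp_all add: subtopology_subtopology) (rule arg_cong[where f=top_of_set]; auto)+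
  have "continuous_map (top_of_set {0..1/2}) ?I (\<lambda>x. 2 * x)"
    "continuous_map (top_of_set {1/2..1}) ?I (\<lambda>x. 2 * x - 1)"
    by (auto simp: continuous_map_in_subtopology intro!: continuous_intros)
  from this[THEN continuous_map_compose] assms(1,2)
  show "continuous_map (subtopology ?I {x \<in> topspace ?I. x \<le> 1/2}) S (\<lambda>x. p (2 * x))"
    "continuous_map (subtopology ?I {x \<in> topspace ?I. 1/2 \<le> x}) S (\<lambda>x. q (2 * x - 1))"
    unfolding half pathin_def o_def by blast+
qed (use assms(3) in \<open>auto simp: continuous_map_iff_continuous mult.commute\<close>)

lemma embedding_pathin_imp_path:
  assumes "embedding_map S euclidean e" "pathin S p"
  shows "path (e \<circ> p)" "path_image (e \<circ> p) \<subseteq> e ` topspace S"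
proof -
  have "continuous_map S (top_of_set (e ` topspace S)) e"
    using assms(1) by (simp add: embedding_map_def homeomorphic_imp_continuous_map)
  then have "pathin (top_of_set (e ` topspace S)) (e \<circ> p)"
    using assms(2) by (rule pathin_compose[rotated])
  then show "path (e \<circ> p)" "path_image (e \<circ> p) \<subseteq> e ` topspace S"
    by (metis pathin_canon_iff image_subset_iff_funcset path_image_def)+
qed

lemma contractible_loop_iff_homotopic_loops:
  assumes e: "embedding_map S euclidean e" and g: "pathin S g"
  shows "contractible_loop S g \<longleftrightarrow> homotopic_loops (e ` topspace S) (e \<circ> g) (\<lambda>_. e (g 0))"
proof -
  let ?T = "e ` topspace S"
  obtain e' where "homeomorphic_maps S (top_of_set ?T) e e'"
    using e by (auto simp: embedding_map_def homeomorphic_map_maps)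
  then have ce: "continuous_map S (top_of_set ?T) e" and ce': "continuous_map (top_of_set ?T) S e'"
    and e'e: "\<And>x. x \<in> topspace S \<Longrightarrow> e' (e x) = x"
    by (auto simp: homeomorphic_maps_def)
  have gS: "g x \<in> topspace S" if "x \<in> {0..1}" for x
    using g that by (auto simp: pathin_def continuous_map_def)
  show ?thesis
  proof
    assume "contractible_loop S g"
    then have "homotopic_loops ?T (e \<circ> g) (e \<circ> (\<lambda>_. g 0))"
      unfolding contractible_loop_def homotopic_loops_def
      by (rule homotopic_with_compose_continuous_map_left[OF _ ce])
        (simp add: pathstart_def pathfinish_def)
    then show "homotopic_loops ?T (e \<circ> g) (\<lambda>_. e (g 0))"
      by (simp add: o_def)
  next
    assume "homotopic_loops ?T (e \<circ> g) (\<lambda>_. e (g 0))"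
    then have "homotopic_with (\<lambda>r. r 0 = r 1) (top_of_set {0..1}) S
        (e' \<circ> (e \<circ> g)) (e' \<circ> (\<lambda>_. e (g 0)))"
      unfolding homotopic_loops_def
      by (rule homotopic_with_compose_continuous_map_left[OF _ ce'])
        (simp add: pathstart_def pathfinish_def)
    then show "contractible_loop S g"
      unfolding contractible_loop_def
      by (rule homotopic_with_eq) (simp_all add: e'e gS)
  qed
qed

lemma contractible_loop_if_halves_return_null:
  assumes e: "embedding_map S euclidean e"
    and g: "pathin S g" "g 1 = g 0" and s: "s \<in> {0..1}"
    and \<delta>: "pathin S \<delta>" "\<delta> 0 = g s" "\<delta> 1 = g 0"
    and null_\<alpha>: "contractible_loop S (join_paths (g \<circ> linepath 0 s) \<delta>)"
    and null_\<gamma>: "contractible_loop S (join_paths (g \<circ> linepath 1 s) \<delta>)"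
  shows "contractible_loop S g"
proof -
  let ?T = "e ` topspace S"
  have \<alpha>: "pathin S (g \<circ> linepath 0 s)" and \<gamma>: "pathin S (g \<circ> linepath 1 s)"
    using g s by (auto intro: pathin_compose_linepath)
  have ends: "(g \<circ> linepath 0 s) 1 = \<delta> 0" "(g \<circ> linepath 1 s) 1 = \<delta> 0"
    "join_paths (g \<circ> linepath 0 s) \<delta> 0 = g 0" "join_paths (g \<circ> linepath 1 s) \<delta> 0 = g 0"
    using g \<delta> by (simp_all add: join_paths_def linepath_def)
  have "homotopic_loops ?T ((e \<circ> (g \<circ> linepath 0 s)) +++ (e \<circ> \<delta>)) (\<lambda>_. e (g 0))"
    "homotopic_loops ?T ((e \<circ> (g \<circ> linepath 1 s)) +++ (e \<circ> \<delta>)) (\<lambda>_. e (g 0))"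
    using null_\<alpha> null_\<gamma> ends
      contractible_loop_iff_homotopic_loops[OF e pathin_join_paths[OF \<alpha> \<delta>(1)]]
      contractible_loop_iff_homotopic_loops[OF e pathin_join_paths[OF \<gamma> \<delta>(1)]]
    by (simp_all add: comp_join_paths)
  then have "homotopic_loops ?T ((e \<circ> (g \<circ> linepath 0 s)) +++ reversepath (e \<circ> (g \<circ> linepath 1 s)))
      (\<lambda>_. e (g 0))"
    by (intro homotopic_loops_null_common_return embedding_pathin_imp_path[OF e] \<alpha> \<gamma>)
      (simp_all add: pathstart_def pathfinish_def linepath_def \<delta> g(2)
        embedding_pathin_imp_path[OF e \<delta>(1)])
  moreover have "reversepath (e \<circ> (g \<circ> linepath 1 s)) = e \<circ> g \<circ> linepath s 1"
    by (auto simp: reversepath_def linepath_def algebra_simps)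
  moreover have "homotopic_paths ?T (e \<circ> g) ((e \<circ> g \<circ> linepath 0 s) +++ (e \<circ> g \<circ> linepath s 1))"
    using embedding_pathin_imp_path[OF e g(1)] s by (intro homotopic_paths_split_linepath) auto
  then have "homotopic_loops ?T (e \<circ> g) ((e \<circ> g \<circ> linepath 0 s) +++ (e \<circ> g \<circ> linepath s 1))"
    using g(2) by (intro homotopic_paths_imp_homotopic_loops)
      (simp_all add: pathstart_def pathfinish_def joinpaths_def linepath_def)
  ultimately have "homotopic_loops ?T (e \<circ> g) (\<lambda>_. e (g 0))"
    by (simp add: comp_assoc homotopic_loops_trans)
  then show ?thesis
    by (simp add: contractible_loop_iff_homotopic_loops[OF e g(1)])
qed

(* Cut points witnessing imitates: the i-th piece of p is p ` {t i..t (Suc i)}. With loose_end the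
   last piece may be a single point; it becomes proper when merged with the first piece of the
   next path (imitating_cuts_join). *)

definition imitating_cuts ::
  "bool \<Rightarrow> ('v \<Rightarrow> 'a set) \<Rightarrow> 'v list \<Rightarrow> (real \<Rightarrow> 'a) \<Rightarrow> (nat \<Rightarrow> real) \<Rightarrow> bool" where
  "imitating_cuts loose_end \<phi> W p t \<longleftrightarrow> t 0 = 0 \<and> t (length W) = 1 \<and>
     (\<forall>i<length W. t i < t (Suc i) \<and> p ` {t i..t (Suc i)} \<subseteq> \<phi> (W ! i) \<and>
        (Suc i < length W \<or> \<not> loose_end \<longrightarrow> \<not> (\<exists>c. p ` {t i..t (Suc i)} = {c})))"

lemma imitates_iff_imitating_cuts:
  "imitates S \<phi> W p \<longleftrightarrow> pathin S p \<and> (\<exists>t. imitating_cuts False \<phi> W p t)"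
  by (simp add: imitates_def imitating_cuts_def)

lemma imitating_cuts_less:
  assumes "imitating_cuts b \<phi> W p t" "i < j" "j \<le> length W"
  shows "t i < t j"
  using assms(2,3)
proof (induction j)
  case (Suc j)
  have "t j < t (Suc j)"
    using assms(1) Suc.prems by (simp add: imitating_cuts_def)
  then show ?case
    using Suc by (cases "i = j") auto
qed simp

lemma imitating_cuts_bounds:
  assumes "imitating_cuts b \<phi> W p t" "i \<le> length W"
  shows "0 \<le> t i" "t i \<le> 1"
  using imitating_cuts_less[OF assms(1), of 0 i] imitating_cuts_less[OF assms(1), of i "length W"]
    assms by (auto simp: imitating_cuts_def le_less)

lemma join_paths_image_left:
  assumes "a \<le> b" "b \<le> 1"
  shows "join_paths p q ` {a/2..b/2} = p ` {a..b}"
proof -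
  have "join_paths p q ` {a/2..b/2} = p ` ((\<lambda>x. 2 * x) ` {a/2..b/2})"
    unfolding image_image using assms by (intro image_cong) (auto simp: join_paths_def)
  also have "(\<lambda>x. 2 * x) ` {a/2..b/2} = {a..b}"
    using assms image_affinity_atLeastAtMost[of 2 0 "a/2" "b/2"] by simp
  finally show ?thesis .
qed

lemma join_paths_image_right:
  assumes "0 \<le> a" "a \<le> b" "p 1 = q 0"
  shows "join_paths p q ` {1/2 + a/2..1/2 + b/2} = q ` {a..b}"
proof -
  have "join_paths p q x = q (2 * x - 1)" if "1/2 \<le> x" for x
  proof (cases "x \<le> 1/2")
    case True
    with that have "2 * x = 1" "2 * x - 1 = 0"
      by simp_all
    then show ?thesis
      using True assms(3) by (simp add: join_paths_def)
  qed (simp add: join_paths_def)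
  then have "join_paths p q ` {1/2 + a/2..1/2 + b/2}
      = q ` ((\<lambda>x. 2 * x - 1) ` {1/2 + a/2..1/2 + b/2})"
    unfolding image_image using assms(1) by (intro image_cong) auto
  also have "(\<lambda>x. 2 * x - 1) ` {1/2 + a/2..1/2 + b/2} = {a..b}"
    using assms image_affinity_atLeastAtMost[of 2 "-1" "1/2 + a/2" "1/2 + b/2"]
    by (simp add: algebra_simps)
  finally show ?thesis .
qed

lemma join_paths_image_junction:
  assumes "a \<le> 1" "0 \<le> b" "p 1 = q 0"
  shows "join_paths p q ` {a/2..1/2 + b/2} = p ` {a..1} \<union> q ` {0..b}"
proof -
  have "{a/2..1/2 + b/2} = {a/2..1/2} \<union> {1/2 + 0/2..1/2 + b/2}"
    using assms(1,2) by auto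
  then show ?thesis
    using join_paths_image_left[of a 1 p q] join_paths_image_right[of 0 b p q] assms
    by (simp add: image_Un)
qed

lemma imitating_cuts_join:
  assumes A: "imitating_cuts True \<phi> A p t" and B: "imitating_cuts False \<phi> B q r"
    and ne: "A \<noteq> []" "B \<noteq> []" and AB: "last A = hd B" and pq: "p 1 = q 0"
  shows "imitating_cuts False \<phi> (A @ tl B) (join_paths p q)
           (\<lambda>i. if i < length A then t i / 2 else 1/2 + r (Suc i - length A) / 2)"
    (is "imitating_cuts _ _ _ _ ?t")
proof -
  define m n where "m = length A" and "n = length B"
  have m: "0 < m" and n: "0 < n"
    using ne by (auto simp: m_def n_def)
  have len: "length (A @ tl B) = m + n - 1"
    using ne by (cases B) (simp_all add: m_def n_def)
  have t: "t 0 = 0" "t m = 1"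
    "\<And>i. i < m \<Longrightarrow> t i < t (Suc i) \<and> p ` {t i..t (Suc i)} \<subseteq> \<phi> (A ! i) \<and>
       (Suc i < m \<longrightarrow> \<not> (\<exists>c. p ` {t i..t (Suc i)} = {c}))"
    using A by (auto simp: imitating_cuts_def m_def)
  have r: "r 0 = 0" "r n = 1"
    "\<And>j. j < n \<Longrightarrow> r j < r (Suc j) \<and> q ` {r j..r (Suc j)} \<subseteq> \<phi> (B ! j) \<and>
       \<not> (\<exists>c. q ` {r j..r (Suc j)} = {c})"
    using B by (auto simp: imitating_cuts_def n_def)
  have piece: "?t i < ?t (Suc i) \<and>
      join_paths p q ` {?t i..?t (Suc i)} \<subseteq> \<phi> ((A @ tl B) ! i) \<and>
      \<not> (\<exists>c. join_paths p q ` {?t i..?t (Suc i)} = {c})" if i: "i < m + n - 1" for i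
  proof -
    consider "Suc i < m" | "Suc i = m" | "m \<le> i"
      by linarith
    then show ?thesis
    proof cases
      case 1
      then have "join_paths p q ` {t i / 2..t (Suc i) / 2} = p ` {t i..t (Suc i)}"
        using t(3)[of i] imitating_cuts_bounds[OF A, of "Suc i"]
        by (intro join_paths_image_left) (auto simp: m_def)
      then show ?thesis
        using 1 t(3)[of i] by (simp add: m_def nth_append)
    next
      case 2
      have "join_paths p q ` {t i / 2..1/2 + r 1 / 2} = p ` {t i..1} \<union> q ` {0..r 1}"
        using 2 t(2) t(3)[of i] r(1) r(3)[of 0] n pq by (intro join_paths_image_junction) auto
      moreover have "i = length A - 1"
        using 2 by (simp add: m_def)
      then have "(A @ tl B) ! i = A ! i" "A ! i = B ! 0"
        using ne AB by (simp_all add: nth_append last_conv_nth hd_conv_nth)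
      ultimately show ?thesis
        using 2 t(2) t(3)[of i] r(1) r(3)[of 0] n by (auto simp: m_def Un_singleton_iff)
    next
      case 3
      define j where "j = Suc i - m"
      have j: "0 < j" "j < n" "Suc (Suc i) - m = Suc j" "(A @ tl B) ! i = B ! j"
        using 3 i ne by (auto simp: j_def m_def n_def nth_append nth_tl Suc_diff_le)
      have "join_paths p q ` {1/2 + r j / 2..1/2 + r (Suc j) / 2} = q ` {r j..r (Suc j)}"
        using r(3)[of j] imitating_cuts_bounds[OF B, of j] j pq
        by (intro join_paths_image_right) (auto simp: n_def)
      moreover have "?t i = 1/2 + r j / 2" "?t (Suc i) = 1/2 + r (Suc j) / 2"
        using 3 j(3) by (simp_all add: j_def m_def)
      ultimately show ?thesis
        using j(4) r(3)[of j] j(2) by simp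
    qed
  qed
  show ?thesis
    unfolding imitating_cuts_def using piece t(1) r(2) m n len
    by (auto simp: m_def n_def)
qed

lemma image_comp_linepath_reverse:
  "(g \<circ> linepath 1 0) ` {1 - b..1 - a} = g ` {a..b}"
proof -
  have "g \<circ> linepath 1 0 = g \<circ> (-) 1"
    by (auto simp: linepath_def)
  then have "(g \<circ> linepath 1 0) ` {1 - b..1 - a} = g ` (-) 1 ` {1 - b..1 - a}"
    by (simp only: image_comp)
  then show ?thesis
    by simp
qed

lemma image_comp_linepath_scale:
  assumes "0 < s"
  shows "(g \<circ> linepath 0 s) ` {a / s..b / s} = g ` {a..b}"
proof -
  have "g \<circ> linepath 0 s = g \<circ> (*) s"
    by (auto simp: linepath_def mult.commute)
  then have "(g \<circ> linepath 0 s) ` {a / s..b / s} = g ` (*) s ` {a / s..b / s}"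
    by (simp only: image_comp)
  then show ?thesis
    using assms by simp
qed

lemma imitating_cuts_reverse:
  assumes g: "imitating_cuts False \<phi> W g t"
  shows "imitating_cuts False \<phi> (rev W) (g \<circ> linepath 1 0) (\<lambda>i. 1 - t (length W - i))"
proof -
  define n where "n = length W"
  have piece: "1 - t (n - i) < 1 - t (n - Suc i) \<and>
      (g \<circ> linepath 1 0) ` {1 - t (n - i)..1 - t (n - Suc i)} \<subseteq> \<phi> (rev W ! i) \<and>
      \<not> (\<exists>c. (g \<circ> linepath 1 0) ` {1 - t (n - i)..1 - t (n - Suc i)} = {c})" if "i < n" for i
  proof -
    define m where "m = n - Suc i"
    have m: "m < n" "n - i = Suc m" "rev W ! i = W ! m"
      using that by (auto simp: m_def n_def rev_nth)
    then have tm: "t m < t (Suc m)" "g ` {t m..t (Suc m)} \<subseteq> \<phi> (W ! m)"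
      "\<not> (\<exists>c. g ` {t m..t (Suc m)} = {c})"
      using g by (auto simp: imitating_cuts_def n_def)
    then show ?thesis
      using image_comp_linepath_reverse[of g "t (Suc m)" "t m"] m by (simp add: m_def)
  qed
  show ?thesis
    using g piece unfolding imitating_cuts_def by (simp add: n_def)
qed

lemma imitating_cuts_prefix:
  assumes g: "imitating_cuts False \<phi> (A @ B) g t" and A: "A \<noteq> []"
    and s: "t (length A - 1) < s" "s < t (length A)"
  shows "imitating_cuts True \<phi> A (g \<circ> linepath 0 s) (\<lambda>i. if i < length A then t i / s else 1)"
    (is "imitating_cuts _ _ _ _ ?T")
proof -
  define k where "k = length A - 1"
  have "0 < length A"
    using A by simp
  then have k: "length A = Suc k" "k < length (A @ B)"
    unfolding k_def length_append by linarith+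
  have sk: "t k < s" "s < t (Suc k)"
    using s k(1) unfolding k_def by simp_all
  have "0 \<le> t k"
    using imitating_cuts_bounds(1)[OF g] k by simp
  then have s_pos: "0 < s"
    using sk by simp
  note image = image_comp_linepath_scale[OF s_pos, of g]
  have tA: "t i < t (Suc i) \<and> g ` {t i..t (Suc i)} \<subseteq> \<phi> (A ! i) \<and>
      \<not> (\<exists>c. g ` {t i..t (Suc i)} = {c})" if "i \<le> k" for i
  proof -
    have "i < length (A @ B)" "(A @ B) ! i = A ! i"
      using that k by (auto simp: nth_append)
    with g show ?thesis
      unfolding imitating_cuts_def by metis
  qed
  have "(g \<circ> linepath 0 s) ` {t k / s..1} = g ` {t k..s}"
    using image[of "t k" s] s_pos by simp
  also have "\<dots> \<subseteq> g ` {t k..t (Suc k)}"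
    using sk by (intro image_mono) auto
  also have "\<dots> \<subseteq> \<phi> (A ! k)"
    using tA[of k] by simp
  finally have last_piece: "(g \<circ> linepath 0 s) ` {t k / s..1} \<subseteq> \<phi> (A ! k)" .
  have piece: "?T i < ?T (Suc i) \<and> (g \<circ> linepath 0 s) ` {?T i..?T (Suc i)} \<subseteq> \<phi> (A ! i) \<and>
      (Suc i < length A \<longrightarrow> \<not> (\<exists>c. (g \<circ> linepath 0 s) ` {?T i..?T (Suc i)} = {c}))"
    if "i < length A" for i
  proof (cases "Suc i < length A")
    case True
    then show ?thesis
      using tA[of i] image[of "t i" "t (Suc i)"] s_pos k by (simp add: divide_strict_right_mono)
  next
    case False
    then have "i = k"
      using that k by simp
    then show ?thesis
      using last_piece sk s_pos k by simp
  qed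
  show ?thesis
    using piece g k by (simp add: imitating_cuts_def)
qed

lemma curve_path_between:
  assumes "curve S C" "a \<in> C" "b \<in> C"
  obtains q where "pathin S q" "q 0 = a" "q 1 = b" "q ` {0..1} \<subseteq> C" "\<not> (\<exists>c. q ` {0..1} = {c})"
proof -
  obtain h where h: "pathin S h" "C = h ` {0..1}" and C: "\<not> (\<exists>c. C = {c})"
    using assms(1) unfolding curve_def by blast
  obtain x y z where xyz: "x \<in> {0..1}" "y \<in> {0..1}" "z \<in> {0..1}"
    "h x = a" "h y = b" "h z \<noteq> a"
    using assms(2,3) C h(2) by blast
  define q where "q = join_paths (h \<circ> linepath x z) (h \<circ> linepath z y)"
  have segment: "(h \<circ> linepath u w) ` {0..1} \<subseteq> C" if "u \<in> {0..1}" "w \<in> {0..1}" for u w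
  proof -
    have "(h \<circ> linepath u w) ` {0..1} = h ` closed_segment u w"
      by (simp only: image_comp[symmetric] linepath_image_01)
    also have "\<dots> \<subseteq> h ` {0..1}"
      using that by (intro image_mono) (auto simp: closed_segment_eq_real_ivl)
    finally show ?thesis
      using h(2) by simp
  qed
  have image: "q ` {0..1} = (h \<circ> linepath x z) ` {0..1} \<union> (h \<circ> linepath z y) ` {0..1}"
    using join_paths_image_junction[of 0 1 "h \<circ> linepath x z" "h \<circ> linepath z y"]
    by (simp add: q_def linepath_def)
  have ends: "q 0 = a" "q 1 = b" "q (1/2) = h z"
    using xyz by (simp_all add: q_def join_paths_def linepath_def)
  show ?thesis
  proof (rule that)
    show "pathin S q"
      unfolding q_def using h(1) xyz
      by (intro pathin_join_paths pathin_compose_linepath) (auto simp: linepath_def)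
    show "q ` {0..1} \<subseteq> C"
      unfolding image using segment xyz by blast
    have "q 0 \<in> q ` {0..1}" "q (1/2) \<in> q ` {0..1}"
      by auto
    then show "\<not> (\<exists>c. q ` {0..1} = {c})"
      using ends xyz(6) by (metis singletonD)
  qed (use ends in simp_all)
qed

lemma curve_subset_topspace: "curve S C \<Longrightarrow> C \<subseteq> topspace S"
  unfolding curve_def by (metis path_image_subset_topspace image_subset_iff_funcset)

lemma imitates_reverse:
  assumes "imitates S \<phi> W q"
  shows "imitates S \<phi> (rev W) (q \<circ> linepath 1 0)"
proof -
  obtain t where "pathin S q" "imitating_cuts False \<phi> W q t"
    using assms by (auto simp: imitates_iff_imitating_cuts)
  then show ?thesis
    unfolding imitates_iff_imitating_cuts
    using imitating_cuts_reverse pathin_compose_linepath[of S q 1 0] by fastforce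
qed

lemma imitates_join_paths:
  assumes "pathin S p" "imitating_cuts True \<phi> A p t" "imitates S \<phi> B q"
    and "A \<noteq> []" "B \<noteq> []" "last A = hd B" "p 1 = q 0"
  shows "imitates S \<phi> (walk_plus A B) (join_paths p q)"
proof -
  obtain r where q: "pathin S q" "imitating_cuts False \<phi> B q r"
    using assms(3) by (auto simp: imitates_iff_imitating_cuts)
  show ?thesis
    unfolding imitates_iff_imitating_cuts walk_plus_def
    using pathin_join_paths[OF assms(1) q(1) assms(7)]
      imitating_cuts_join[OF assms(2) q(2) assms(4-7)] by blast
qed


lemma imitating_cuts_join_const:
  assumes "q ` {0..1} \<subseteq> \<phi> w" "\<not> (\<exists>c. q ` {0..1} = {c})" "q 1 \<in> \<phi> x"
  shows "imitating_cuts True \<phi> [w, x] (join_paths q (\<lambda>_. q 1)) (\<lambda>i. real i / 2)"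
proof -
  have "join_paths q (\<lambda>_. q 1) ` {0..1/2} = q ` {0..1}"
    "join_paths q (\<lambda>_. q 1) ` {1/2..1} = {q 1}"
    using join_paths_image_left[of 0 1 q "\<lambda>_. q 1"] join_paths_image_right[of 0 1 q "\<lambda>_. q 1"]
    by (simp_all add: image_constant_conv)
  then show ?thesis
    using assms by (auto simp: imitating_cuts_def less_Suc_eq)
qed

lemma walk_imitated:
  assumes rep: "string_rep S V E \<phi>"
  shows "walk V E W \<Longrightarrow> a \<in> \<phi> (hd W) \<Longrightarrow> b \<in> \<phi> (last W) \<Longrightarrow>
    \<exists>q. imitates S \<phi> W q \<and> q 0 = a \<and> q 1 = b"
proof (induction W arbitrary: a)
  case Nil
  then show ?case
    by (simp add: walk_def)
next
  case (Cons w W')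
  have w: "w \<in> V" "curve S (\<phi> w)" "a \<in> \<phi> w"
    using Cons.prems rep by (auto simp: walk_def string_rep_def)
  show ?case
  proof (cases W')
    case Nil
    then obtain q where q: "pathin S q" "q 0 = a" "q 1 = b" "q ` {0..1} \<subseteq> \<phi> w"
      "\<not> (\<exists>c. q ` {0..1} = {c})"
      using curve_path_between[OF w(2,3)] Cons.prems(3) by auto
    then have "imitating_cuts False \<phi> [w] q (\<lambda>i. real i)"
      by (simp add: imitating_cuts_def)
    then show ?thesis
      using q Nil by (auto simp: imitates_iff_imitating_cuts)
  next
    case (Cons x W'')
    have x: "x \<in> V" "E w x" "walk V E W'"
      using Cons.prems(1) \<open>W' = x # W''\<close> by (auto simp: walk_def nth_Cons_Suc)
    obtain c where c: "c \<in> \<phi> w" "c \<in> \<phi> x"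
    proof (cases "w = x")
      case False
      then show ?thesis
        using that rep w(1) x unfolding string_rep_def by blast
    qed (use that w(3) in blast)
    obtain q where q: "imitates S \<phi> W' q" "q 0 = c" "q 1 = b"
      using Cons.IH[OF x(3)] Cons.prems(3) c(2) \<open>W' = x # W''\<close> by auto
    obtain q1 where q1: "pathin S q1" "q1 0 = a" "q1 1 = c" "q1 ` {0..1} \<subseteq> \<phi> w"
      "\<not> (\<exists>c. q1 ` {0..1} = {c})"
      using curve_path_between[OF w(2,3) c(1)] by auto
    \<comment> \<open>The constant tail is the loose piece of x, merged with the first piece of q.\<close>
    define p where "p = join_paths q1 (\<lambda>_. q1 1)"
    have "pathin S p"
      unfolding p_def using q1 c(1) curve_subset_topspace[OF w(2)]
      by (intro pathin_join_paths) auto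
    moreover have "imitating_cuts True \<phi> [w, x] p (\<lambda>i. real i / 2)"
      unfolding p_def using q1 c(2) by (intro imitating_cuts_join_const) auto
    ultimately have "imitates S \<phi> (walk_plus [w, x] W') (join_paths p q)"
      using q q1(3) \<open>W' = x # W''\<close>
      by (intro imitates_join_paths) (auto simp: p_def join_paths_def)
    moreover have "join_paths p q 0 = a" "join_paths p q 1 = b"
      using q q1 by (simp_all add: p_def join_paths_def)
    ultimately show ?thesis
      using \<open>W' = x # W''\<close> by (auto simp: walk_plus_def)
  qed
qed

lemma rev_walk_minus:
  assumes "W1 \<noteq> []" "W2 \<noteq> []" "last W1 = last W2"
  shows "rev (walk_minus W1 W2) = walk_minus W2 W1"
  using assms
  by (cases W1 rule: rev_cases; cases W2 rule: rev_cases) (auto simp: walk_minus_def walk_plus_def)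

lemma imitates_walk_minus_split:
  assumes g: "imitates S \<phi> (walk_minus W1 W2) g" and ne: "W1 \<noteq> []" "W2 \<noteq> []"
    and v: "last W1 = last W2"
  obtains s t1 t2 where "s \<in> {0..1}" "g 0 \<in> \<phi> (hd W1)" "g s \<in> \<phi> (last W1)"
    "imitating_cuts True \<phi> W1 (g \<circ> linepath 0 s) t1"
    "imitating_cuts True \<phi> W2 (g \<circ> linepath 1 s) t2"
proof -
  obtain t where t: "imitating_cuts False \<phi> (W1 @ tl (rev W2)) g t"
    using g by (auto simp: imitates_iff_imitating_cuts walk_minus_def walk_plus_def)
  define k where "k = length W1 - 1"
  define N where "N = length (W1 @ tl (rev W2))"
  have k: "length W1 = Suc k" "k < N" "N - length W2 = k" "N - (length W2 - 1) = Suc k"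
    using ne by (cases W1; cases W2 rule: rev_cases; auto simp: k_def N_def)+
  have pieces: "t i < t (Suc i)" "g ` {t i..t (Suc i)} \<subseteq> \<phi> ((W1 @ tl (rev W2)) ! i)"
    if "i < N" for i
    using t that by (auto simp: imitating_cuts_def N_def)
  define s where "s = (t k + t (Suc k)) / 2"
  have s: "t k < s" "s < t (Suc k)"
    using pieces(1)[OF k(2)] by (simp_all add: s_def)
  show ?thesis
  proof (rule that)
    show "s \<in> {0..1}"
      using s imitating_cuts_bounds[OF t, of k] imitating_cuts_bounds[OF t, of "Suc k"] k
      by (auto simp: N_def)
    show "g 0 \<in> \<phi> (hd W1)"
      using pieces(2)[of 0] pieces(1)[of 0] t k ne
      by (auto simp: imitating_cuts_def hd_conv_nth nth_append)
    show "g s \<in> \<phi> (last W1)"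
      using pieces(2)[OF k(2)] s k ne by (auto simp: last_conv_nth nth_append)
    show "imitating_cuts True \<phi> W1 (g \<circ> linepath 0 s) (\<lambda>i. if i < length W1 then t i / s else 1)"
      using s k by (intro imitating_cuts_prefix[OF t ne(1)]) simp_all
    have "imitating_cuts False \<phi> (W2 @ tl (rev W1)) (g \<circ> linepath 1 0) (\<lambda>i. 1 - t (N - i))"
      using imitating_cuts_reverse[OF t] rev_walk_minus[OF ne v]
      by (simp add: N_def walk_minus_def walk_plus_def)
    then have "imitating_cuts True \<phi> W2 (g \<circ> linepath 1 0 \<circ> linepath 0 (1 - s))
        (\<lambda>i. if i < length W2 then (1 - t (N - i)) / (1 - s) else 1)"
      using s k ne(2) by (intro imitating_cuts_prefix) simp_all
    moreover have "g \<circ> linepath 1 0 \<circ> linepath 0 (1 - s) = g \<circ> linepath 1 s"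
      by (auto simp: linepath_def algebra_simps)
    ultimately show "imitating_cuts True \<phi> W2 (g \<circ> linepath 1 s)
        (\<lambda>i. if i < length W2 then (1 - t (N - i)) / (1 - s) else 1)"
      by simp
  qed
qed

theorem lemma15:
  fixes S :: "'a topology" and V :: "'v set" and E :: "'v \<Rightarrow> 'v \<Rightarrow> bool"
    and \<phi> :: "'v \<Rightarrow> 'a set" and u v :: 'v and W1 W2 W3 :: "'v list"
  assumes "surface S" and "simple_graph V E" and "string_rep S V E \<phi>"
    and "u \<in> V" and "v \<in> V"
    and "walk V E W1" and "hd W1 = u" and "last W1 = v"
    and "walk V E W2" and "hd W2 = u" and "last W2 = v"
    and "walk V E W3" and "hd W3 = u" and "last W3 = v"
    and "imitates_noncontractible S \<phi> (walk_minus W1 W2)"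
  shows "imitates_noncontractible S \<phi> (walk_minus W1 W3) \<or>
         imitates_noncontractible S \<phi> (walk_minus W2 W3)"
proof -
  obtain e :: "'a \<Rightarrow> ('a \<Rightarrow> real) \<Rightarrow> real" where e: "embedding_map S euclidean e"
    using surface_embedding_euclidean[OF assms(1)] by blast
  obtain g where g: "imitates S \<phi> (walk_minus W1 W2) g" "g 0 = g 1" "\<not> contractible_loop S g"
    using assms(15) by (auto simp: imitates_noncontractible_def)
  have ne: "W1 \<noteq> []" "W2 \<noteq> []"
    using assms(6,9) by (auto simp: walk_def)
  obtain s t1 t2 where s: "s \<in> {0..1}" "g 0 \<in> \<phi> u" "g s \<in> \<phi> v"
    and \<alpha>: "imitating_cuts True \<phi> W1 (g \<circ> linepath 0 s) t1"
    and \<gamma>: "imitating_cuts True \<phi> W2 (g \<circ> linepath 1 s) t2"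
    using imitates_walk_minus_split[OF g(1) ne] assms(7,8,11) by metis
  obtain q where q: "imitates S \<phi> W3 q" "q 0 = g 0" "q 1 = g s"
    using walk_imitated[OF assms(3,12)] s assms(13,14) by auto
  define \<delta> where "\<delta> = q \<circ> linepath 1 0"
  have \<delta>: "imitates S \<phi> (rev W3) \<delta>" "\<delta> 0 = g s" "\<delta> 1 = g 0"
    using imitates_reverse[OF q(1)] q by (simp_all add: \<delta>_def linepath_def)
  have paths: "pathin S g" "pathin S \<delta>"
    using g(1) \<delta>(1) by (simp_all add: imitates_def)
  have "imitates S \<phi> (walk_minus W1 W3) (join_paths (g \<circ> linepath 0 s) \<delta>)"
    "imitates S \<phi> (walk_minus W2 W3) (join_paths (g \<circ> linepath 1 s) \<delta>)"
    unfolding walk_minus_def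
    using imitates_join_paths[OF pathin_compose_linepath[OF paths(1)] \<alpha> \<delta>(1)]
      imitates_join_paths[OF pathin_compose_linepath[OF paths(1)] \<gamma> \<delta>(1)]
      ne s(1) \<delta>(2) g(2) assms(8,11,12,14)
    by (auto simp: walk_def hd_rev linepath_def)
  moreover have "join_paths (g \<circ> linepath 0 s) \<delta> 0 = join_paths (g \<circ> linepath 0 s) \<delta> 1"
    "join_paths (g \<circ> linepath 1 s) \<delta> 0 = join_paths (g \<circ> linepath 1 s) \<delta> 1"
    using g(2) \<delta>(3) by (simp_all add: join_paths_def linepath_def)
  moreover have "\<not> contractible_loop S (join_paths (g \<circ> linepath 0 s) \<delta>) \<or>
      \<not> contractible_loop S (join_paths (g \<circ> linepath 1 s) \<delta>)"
    using contractible_loop_if_halves_return_null[OF e paths(1) g(2)[symmetric] s(1) paths(2) \<delta>(2,3)]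
      g(3) by blast
  ultimately show ?thesis
    unfolding imitates_noncontractible_def by blast
qed
end
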